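(* For $0<\Delta<2$ let $S_1$ be the square with vertices $(\pm1,\pm1,0)$ and $S_2$ the square with vertices $(\Delta\pm1,0,\pm1)$ (both of side length 2); they form a Hopf link. The minimum distance energy of the link $S_1\cup S_2$ is $$E(\Delta)=8+8\left(\frac{1}{(2+\Delta)^2}+\frac{1}{(2-\Delta)^2}+\frac{2}{\Delta^2}+4+2+\frac{4}{1+\Delta^2}\right),$$ where $8$ is the sum of the self-energies of the two squares (4 each) and the remaining term is the cross-energy. The function $E$ has a unique minimizer $\Delta^*$ on $(0,2)$, where $x=(\Delta^* )^2$ is the unique root in $(0,4)$ of $2x^5-10x^4+73x^3-48x^2-40x-32=0$; numerically $\Delta^*\approx1.203$ and $E(\Delta^* )\approx93.5$.
   Context: For a link of closed polygons in $\mathbb R^3$ (each with at least four edges), the minimum distance (MD) energy is $E_{MD}=\sum_{(e,e')}\frac{\ell_e\ell_{e'}}{\mathrm{MD}(e,e')^2}$, summed over all ordered pairs $(e,e')$ of distinct edges that share no vertex (edges on different components never share a vertex), where $\ell_e$ is the length of edge $e$ and $\mathrm{MD}(e,e')$ is the minimum Euclidean distance between the two closed line segments. With this convention a square has MD energy $4$. *)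

theory Defs
  imports "HOL-Analysis.Analysis"
begin

text \<open>A closed polygon in R^3 is given by its list of vertices (v_0, ..., v_{n-1});
  its edges are the segments [v_i, v_{(i+1) mod n}].
  An edge of a link is indexed by a pair (k, i): component k, edge i.\<close>

type_synonym polygon = "(real^3) list"
type_synonym link = "polygon list"

definition link_edges :: "link \<Rightarrow> (nat \<times> nat) set" where
  "link_edges L = {(k, i). k < length L \<and> i < length (L ! k)}"

definition edge_start :: "link \<Rightarrow> nat \<times> nat \<Rightarrow> real^3" where
  "edge_start L e = (L ! fst e) ! snd e"

definition edge_end :: "link \<Rightarrow> nat \<times> nat \<Rightarrow> real^3" where
  "edge_end L e = (L ! fst e) ! (Suc (snd e) mod length (L ! fst e))"

definition edge_seg :: "link \<Rightarrow> nat \<times> nat \<Rightarrow> (real^3) set" where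
  "edge_seg L e = closed_segment (edge_start L e) (edge_end L e)"

definition edge_len :: "link \<Rightarrow> nat \<times> nat \<Rightarrow> real" where
  "edge_len L e = dist (edge_start L e) (edge_end L e)"

definition edge_vertex_idx :: "link \<Rightarrow> nat \<times> nat \<Rightarrow> nat set" where
  "edge_vertex_idx L e = {snd e, Suc (snd e) mod length (L ! fst e)}"

definition share_no_vertex :: "link \<Rightarrow> nat \<times> nat \<Rightarrow> nat \<times> nat \<Rightarrow> bool" where
  "share_no_vertex L e e' \<longleftrightarrow>
     fst e \<noteq> fst e' \<or> edge_vertex_idx L e \<inter> edge_vertex_idx L e' = {}"

definition MD :: "link \<Rightarrow> nat \<times> nat \<Rightarrow> nat \<times> nat \<Rightarrow> real" where
  "MD L e e' = setdist (edge_seg L e) (edge_seg L e')"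

definition MD_energy :: "link \<Rightarrow> real" where
  "MD_energy L =
     (\<Sum>(e, e') \<in> {(e, e'). e \<in> link_edges L \<and> e' \<in> link_edges L \<and> e \<noteq> e'
                        \<and> share_no_vertex L e e'}.
        edge_len L e * edge_len L e' / (MD L e e')\<^sup>2)"

definition square1 :: polygon where
  "square1 = [vector [1, 1, 0], vector [-1, 1, 0], vector [-1, -1, 0], vector [1, -1, 0]]"

definition square2 :: "real \<Rightarrow> polygon" where
  "square2 \<Delta> = [vector [\<Delta> + 1, 0, 1], vector [\<Delta> - 1, 0, 1],
                 vector [\<Delta> - 1, 0, -1], vector [\<Delta> + 1, 0, -1]]"

definition hopf_E :: "real \<Rightarrow> real" where
  "hopf_E \<Delta> = 8 + 8 * (1 / (2 + \<Delta>)\<^sup>2 + 1 / (2 - \<Delta>)\<^sup>2 + 2 / \<Delta>\<^sup>2 + 4 + 2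
                         + 4 / (1 + \<Delta>\<^sup>2))"

definition hopf_poly :: "real \<Rightarrow> real" where
  "hopf_poly x = 2 * x ^ 5 - 10 * x ^ 4 + 73 * x ^ 3 - 48 * x ^ 2 - 40 * x - 32"

end

theory Submission
  imports Defs
begin

(* Every edge of either square is parallel to a coordinate axis, so for any two edges there is a
  pair of points, one on each, that is closest in every coordinate separately; such a pair realises
  the minimum distance. This gives the twenty distances between non-adjacent edges in closed form,
  and summing yields E. Differentiating, E'(\<Delta>) has the sign of p(\<Delta>^2) with p = hopf_poly, and p is
  negative on (0, 1] and increasing on [1, \<infinity>), so it has exactly one positive root x, which sign
  evaluation places between 1.2036^2 and 1.2037^2. Hence E decreases on (0, sqrt x] and increases
  on [sqrt x, 2), and bounding each term of E on [1.2036, 1.2037] gives the minimum value. *)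

lemma power2_dist_vec:
  fixes x y :: "real^'n"
  shows "(dist x y)\<^sup>2 = (\<Sum>i\<in>UNIV. (x$i - y$i)\<^sup>2)"
  by (simp add: dist_vec_def L2_set_def dist_real_def sum_nonneg)

lemma dist_vec_le_if_coordinatewise_le:
  fixes x y x' y' :: "real^'n"
  assumes "\<And>i. \<bar>x$i - y$i\<bar> \<le> \<bar>x'$i - y'$i\<bar>"
  shows "dist x y \<le> dist x' y'"
  using assms unfolding dist_vec_def dist_real_def by (intro L2_set_mono) auto

lemma setdist_eq_dist_if_coordinatewise_closest:
  fixes S T :: "(real^'n) set"
  assumes "x \<in> S" "y \<in> T"
    and "\<And>x' y' i. x' \<in> S \<Longrightarrow> y' \<in> T \<Longrightarrow> \<bar>x$i - y$i\<bar> \<le> \<bar>x'$i - y'$i\<bar>"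
  shows "setdist S T = dist x y"
  using assms by (intro setdist_unique dist_vec_le_if_coordinatewise_le) auto

lemma setdist_closed_segments_eq:
  fixes a b c d :: "real^'n"
  assumes "u \<in> {0..1}" "v \<in> {0..1}"
    and "\<And>s t. s \<in> {0..1} \<Longrightarrow> t \<in> {0..1} \<Longrightarrow> \<forall>i.
           \<bar>((1 - u) * a$i + u * b$i) - ((1 - v) * c$i + v * d$i)\<bar>
             \<le> \<bar>((1 - s) * a$i + s * b$i) - ((1 - t) * c$i + t * d$i)\<bar>"
  shows "setdist (closed_segment a b) (closed_segment c d)
           = dist ((1 - u) *\<^sub>R a + u *\<^sub>R b) ((1 - v) *\<^sub>R c + v *\<^sub>R d)"
  using assms by (intro setdist_eq_dist_if_coordinatewise_closest) (auto simp: closed_segment_def)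

lemma MD_commute: "MD L e e' = MD L e' e"
  by (simp add: MD_def setdist_sym)

lemma finite_link_edges: "finite (link_edges L)"
proof -
  have "link_edges L = (SIGMA k:{..<length L}. {..<length (L ! k)})"
    by (auto simp: link_edges_def)
  then show ?thesis
    by simp
qed

lemma MD_energy_eq_double_sum:
  "MD_energy L = (\<Sum>e\<in>link_edges L. \<Sum>e'\<in>link_edges L.
     if e \<noteq> e' \<and> share_no_vertex L e e' then edge_len L e * edge_len L e' / (MD L e e')\<^sup>2 else 0)"
proof -
  have "{(e, e'). e \<in> link_edges L \<and> e' \<in> link_edges L \<and> e \<noteq> e' \<and> share_no_vertex L e e'}
      = {p \<in> link_edges L \<times> link_edges L. fst p \<noteq> snd p \<and> share_no_vertex L (fst p) (snd p)}"
    by auto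
  then show ?thesis
    unfolding MD_energy_def
    by (simp add: sum.inter_filter finite_link_edges sum.cartesian_product case_prod_beta)
qed

lemma has_real_derivative_divide_power2:
  fixes f :: "real \<Rightarrow> real"
  assumes "(f has_real_derivative f') (at t)" "f t \<noteq> 0"
  shows "((\<lambda>x. c / (f x)\<^sup>2) has_real_derivative - 2 * c * f' / f t ^ 3) (at t)"
  using assms by (auto intro!: derivative_eq_intros simp: field_simps eval_nat_numeral)

lemma strict_min_of_derivative_sign_change:
  fixes f f' :: "real \<Rightarrow> real"
  assumes deriv: "\<And>t. a < t \<Longrightarrow> t < b \<Longrightarrow> (f has_real_derivative f' t) (at t)"
    and neg: "\<And>t. a < t \<Longrightarrow> t < c \<Longrightarrow> f' t < 0"
    and pos: "\<And>t. c < t \<Longrightarrow> t < b \<Longrightarrow> 0 < f' t"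
    and "a < c" "c < b" "a < x" "x < b" "x \<noteq> c"
  shows "f c < f x"
proof -
  have cont: "continuous_on {s..t} f" if "a < s" "t < b" for s t
    using that by (intro continuous_at_imp_continuous_on ballI DERIV_isCont[OF deriv]) auto
  show ?thesis
  proof (cases "x < c")
    case True
    show ?thesis
      by (rule DERIV_neg_imp_decreasing_open[OF True _ cont])
        (use assms True in \<open>auto intro!: exI[of _ "f' _"] deriv neg\<close>)
  next
    case False
    with \<open>x \<noteq> c\<close> have "c < x" by simp
    show ?thesis
      by (rule DERIV_pos_imp_increasing_open[OF \<open>c < x\<close> _ cont])
        (use assms \<open>c < x\<close> in \<open>auto intro!: exI[of _ "f' _"] deriv pos\<close>)
  qed
qed

lemma minimizer_iff_eq_strict_minimizer:
  fixes f :: "'a \<Rightarrow> 'b::linorder"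
  assumes "P c" "\<And>x. P x \<Longrightarrow> x \<noteq> c \<Longrightarrow> f c < f x"
  shows "(P x \<and> (\<forall>y. P y \<longrightarrow> f x \<le> f y)) \<longleftrightarrow> x = c"
  using assms by (metis le_less not_le)

abbreviation hopf_link :: "real \<Rightarrow> link" where
  "hopf_link \<Delta> \<equiv> [square1, square2 \<Delta>]"

lemma link_edges_hopf_link: "link_edges (hopf_link D) = {0,1} \<times> {0,1,2,3}"
  by (auto simp: link_edges_def square1_def square2_def less_Suc_eq numeral_eq_Suc)

lemma edge_len_hopf_link:
  assumes "e \<in> link_edges (hopf_link D)"
  shows "edge_len (hopf_link D) e = 2"
  using assms unfolding link_edges_hopf_link
  by (auto simp: edge_len_def edge_start_def edge_end_def square1_def square2_def
      dist_vec_def L2_set_def sum_3 dist_real_def)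

lemma share_no_vertex_hopf_link:
  assumes "k < 2"
  shows "share_no_vertex (hopf_link D) (k, i) (k', i')
           \<longleftrightarrow> k \<noteq> k' \<or> {i, Suc i mod 4} \<inter> {i', Suc i' mod 4} = {}"
  using assms
  by (auto simp: share_no_vertex_def edge_vertex_idx_def less_2_cases_iff square1_def square2_def)

context
  notes [simp] = power2_dist_vec sum_3 forall_3 abs_if algebra_simps
begin

lemma hopf_link_MD_same_component:
  shows "(MD (hopf_link D) (0,0) (0,2))\<^sup>2 = 4"
    and "(MD (hopf_link D) (0,1) (0,3))\<^sup>2 = 4"
    and "(MD (hopf_link D) (1,0) (1,2))\<^sup>2 = 4"
    and "(MD (hopf_link D) (1,1) (1,3))\<^sup>2 = 4"
  unfolding MD_def edge_seg_def edge_start_def edge_end_def square1_def square2_def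
  subgoal by (subst setdist_closed_segments_eq[of 0 1]) auto
  subgoal by (subst setdist_closed_segments_eq[of 0 1]) auto
  subgoal by (subst setdist_closed_segments_eq[of 0 1]) auto
  subgoal by (subst setdist_closed_segments_eq[of 0 1]) auto
  done

lemma hopf_link_MD_cross:
  assumes "0 < D" "D < 2"
  shows "(MD (hopf_link D) (0,0) (1,0))\<^sup>2 = 2"
    and "(MD (hopf_link D) (0,0) (1,1))\<^sup>2 = 1"
    and "(MD (hopf_link D) (0,0) (1,2))\<^sup>2 = 2"
    and "(MD (hopf_link D) (0,0) (1,3))\<^sup>2 = 1 + D\<^sup>2"
    and "(MD (hopf_link D) (0,1) (1,0))\<^sup>2 = 1 + D\<^sup>2"
    and "(MD (hopf_link D) (0,1) (1,1))\<^sup>2 = D\<^sup>2"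
    and "(MD (hopf_link D) (0,1) (1,2))\<^sup>2 = 1 + D\<^sup>2"
    and "(MD (hopf_link D) (1,3) (0,1))\<^sup>2 = (2 + D)\<^sup>2"
    and "(MD (hopf_link D) (0,2) (1,0))\<^sup>2 = 2"
    and "(MD (hopf_link D) (0,2) (1,1))\<^sup>2 = 1"
    and "(MD (hopf_link D) (0,2) (1,2))\<^sup>2 = 2"
    and "(MD (hopf_link D) (0,2) (1,3))\<^sup>2 = 1 + D\<^sup>2"
    and "(MD (hopf_link D) (0,3) (1,0))\<^sup>2 = 1"
    and "(MD (hopf_link D) (0,3) (1,1))\<^sup>2 = (2 - D)\<^sup>2"
    and "(MD (hopf_link D) (0,3) (1,2))\<^sup>2 = 1"
    and "(MD (hopf_link D) (0,3) (1,3))\<^sup>2 = D\<^sup>2"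
  unfolding MD_def edge_seg_def edge_start_def edge_end_def square1_def square2_def
  subgoal by (subst setdist_closed_segments_eq[of 0 "D/2"]) (use assms in auto)
  subgoal by (subst setdist_closed_segments_eq[of "1-D/2" "1/2"]) (use assms in auto)
  subgoal by (subst setdist_closed_segments_eq[of 0 "1-D/2"]) (use assms in auto)
  subgoal by (subst setdist_closed_segments_eq[of 0 "1/2"]) (use assms in auto)
  subgoal by (subst setdist_closed_segments_eq[of "1/2" 1]) (use assms in auto)
  subgoal by (subst setdist_closed_segments_eq[of "1/2" "1/2"]) (use assms in auto)
  subgoal by (subst setdist_closed_segments_eq[of "1/2" 0]) (use assms in auto)
  subgoal by (subst setdist_closed_segments_eq[of "1/2" "1/2"]) (use assms in auto)
  subgoal by (subst setdist_closed_segments_eq[of 1 "D/2"]) (use assms in auto)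
  subgoal by (subst setdist_closed_segments_eq[of "D/2" "1/2"]) (use assms in auto)
  subgoal by (subst setdist_closed_segments_eq[of "D/2" 0]) (use assms in auto)
  subgoal by (subst setdist_closed_segments_eq[of 1 "1/2"]) (use assms in auto)
  subgoal by (subst setdist_closed_segments_eq[of "1/2" "D/2"]) (use assms in auto)
  subgoal by (subst setdist_closed_segments_eq[of "1/2" "1/2"]) (use assms in auto)
  subgoal by (subst setdist_closed_segments_eq[of "1/2" "1-D/2"]) (use assms in auto)
  subgoal by (subst setdist_closed_segments_eq[of "1/2" "1/2"]) (use assms in auto)
  done

end

lemma MD_energy_hopf_link:
  assumes "0 < D" "D < 2"
  shows "MD_energy (hopf_link D) = hopf_E D"
proof -
  have swap: "(MD (hopf_link D) e' e)\<^sup>2 = c" if "(MD (hopf_link D) e e')\<^sup>2 = c" for e e' c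
    using that by (simp add: MD_commute)
  note MD_sq = hopf_link_MD_same_component hopf_link_MD_cross[OF assms]
  have "MD_energy (hopf_link D) = (\<Sum>e\<in>link_edges (hopf_link D). \<Sum>e'\<in>link_edges (hopf_link D).
      if e \<noteq> e' \<and> share_no_vertex (hopf_link D) e e' then 4 / (MD (hopf_link D) e e')\<^sup>2 else 0)"
    unfolding MD_energy_eq_double_sum by (intro sum.cong refl) (simp add: edge_len_hopf_link)
  also have "\<dots> = hopf_E D"
    using MD_sq MD_sq[THEN swap]
    by (simp add: link_edges_hopf_link sum.cartesian_product[symmetric] share_no_vertex_hopf_link
        hopf_E_def distrib_left)
  finally show ?thesis .
qed

lemma hopf_E_has_derivative:
  assumes "0 < t" "t < 2"
  shows "(hopf_E has_real_derivative
           64 * hopf_poly (t\<^sup>2) / (t ^ 3 * (2 - t) ^ 3 * (2 + t) ^ 3 * (1 + t\<^sup>2)\<^sup>2)) (at t)"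
proof -
  have "0 < 1 + t\<^sup>2"
    by (intro add_pos_nonneg) auto
  then have "((\<lambda>x. 4 / (1 + x\<^sup>2)) has_real_derivative - 8 * t / (1 + t\<^sup>2)\<^sup>2) (at t)"
    by (auto intro!: derivative_eq_intros simp: field_simps eval_nat_numeral)
  moreover have "((\<lambda>x. 1 / (2 + x)\<^sup>2) has_real_derivative - 2 / (2 + t) ^ 3) (at t)"
    "((\<lambda>x. 1 / (2 - x)\<^sup>2) has_real_derivative 2 / (2 - t) ^ 3) (at t)"
    "((\<lambda>x. 2 / x\<^sup>2) has_real_derivative - 4 / t ^ 3) (at t)"
    using assms
    by (auto intro!: has_real_derivative_divide_power2[THEN DERIV_cong] derivative_eq_intros)
  ultimately have "(hopf_E has_real_derivative
      0 + 8 * (- 2 / (2 + t) ^ 3 + 2 / (2 - t) ^ 3 + - 4 / t ^ 3 + 0 + 0 + - 8 * t / (1 + t\<^sup>2)\<^sup>2)) (at t)"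
    unfolding hopf_E_def[abs_def] by (intro DERIV_add DERIV_cmult DERIV_const)
  moreover have "8 * (- 2 * t ^ 3 * (2 - t) ^ 3 * (1 + t\<^sup>2)\<^sup>2 + 2 * t ^ 3 * (2 + t) ^ 3 * (1 + t\<^sup>2)\<^sup>2
      - 4 * (2 + t) ^ 3 * (2 - t) ^ 3 * (1 + t\<^sup>2)\<^sup>2 - 8 * (t * t ^ 3) * (2 + t) ^ 3 * (2 - t) ^ 3)
      = 64 * hopf_poly (t\<^sup>2)"
    unfolding hopf_poly_def by algebra
  ultimately show ?thesis
    using assms \<open>0 < 1 + t\<^sup>2\<close> by (simp add: field_simps)
qed

lemma hopf_poly_neg_le_one:
  assumes "0 < x" "x \<le> 1"
  shows "hopf_poly x < 0"
proof -
  have "x ^ 5 \<le> 1" "x\<^sup>2 \<le> 1" "x ^ 3 \<le> x\<^sup>2" "0 \<le> x ^ 4"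
    using assms by (auto intro: power_le_one power_decreasing)
  then show ?thesis
    unfolding hopf_poly_def using assms by linarith
qed

lemma hopf_poly_strict_mono_ge_one:
  assumes "1 \<le> x" "x < y"
  shows "hopf_poly x < hopf_poly y"
proof (rule DERIV_pos_imp_increasing[OF \<open>x < y\<close>])
  fix t assume "x \<le> t" "t \<le> y"
  with assms have "1 \<le> t" by simp
  then have "t \<le> t\<^sup>2"
    by (simp add: power2_eq_square)
  moreover have "0 \<le> 10 * t\<^sup>2 * (t - 2)\<^sup>2"
    by simp
  moreover have "10 * t\<^sup>2 * (t - 2)\<^sup>2 = 10 * t ^ 4 - 40 * t ^ 3 + 40 * t\<^sup>2"
    by algebra
  ultimately have "0 < 10 * t ^ 4 - 40 * t ^ 3 + 219 * t\<^sup>2 - 96 * t - 40"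
    using \<open>1 \<le> t\<close> by linarith
  moreover have "(hopf_poly has_real_derivative 10 * t ^ 4 - 40 * t ^ 3 + 219 * t\<^sup>2 - 96 * t - 40) (at t)"
    unfolding hopf_poly_def[abs_def] by (rule derivative_eq_intros refl | simp)+
  ultimately show "\<exists>y. (hopf_poly has_real_derivative y) (at t) \<and> 0 < y"
    by blast
qed

lemma hopf_poly_root:
  obtains x0 where "1.2036\<^sup>2 < x0" "x0 < 1.2037\<^sup>2" "hopf_poly x0 = 0"
    and "\<And>x. 0 < x \<Longrightarrow> x < x0 \<Longrightarrow> hopf_poly x < 0"
    and "\<And>x. x0 < x \<Longrightarrow> 0 < hopf_poly x"
proof -
  have lower: "hopf_poly (1.2036\<^sup>2) < 0" and upper: "0 < hopf_poly (1.2037\<^sup>2)"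
    by (simp_all add: hopf_poly_def power_numeral_reduce)
  have "continuous_on {1.2036\<^sup>2..1.2037\<^sup>2} hopf_poly"
    unfolding hopf_poly_def by (intro continuous_intros)
  then obtain x0 where x0: "1.2036\<^sup>2 \<le> x0" "x0 \<le> 1.2037\<^sup>2" "hopf_poly x0 = 0"
    using IVT'[of hopf_poly "1.2036\<^sup>2" 0 "1.2037\<^sup>2"] lower upper by force
  with lower upper have strict: "1.2036\<^sup>2 < x0" "x0 < 1.2037\<^sup>2"
    by (auto simp: order_le_less)
  have neg: "hopf_poly x < 0" if "0 < x" "x < x0" for x
    using hopf_poly_neg_le_one[of x] hopf_poly_strict_mono_ge_one[of x x0] that x0
    by (cases "x \<le> 1") auto
  have pos: "0 < hopf_poly x" if "x0 < x" for x
    using hopf_poly_strict_mono_ge_one[of x0 x] that x0 by (simp add: power2_eq_square)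
  show ?thesis
    using strict x0(3) neg pos by (rule that)
qed

lemma hopf_E_strict_min:
  assumes "0 < d" "d < 2"
    and neg: "\<And>x. 0 < x \<Longrightarrow> x < d\<^sup>2 \<Longrightarrow> hopf_poly x < 0"
    and pos: "\<And>x. d\<^sup>2 < x \<Longrightarrow> 0 < hopf_poly x"
    and "0 < \<Delta>" "\<Delta> < 2" "\<Delta> \<noteq> d"
  shows "hopf_E d < hopf_E \<Delta>"
proof (rule strict_min_of_derivative_sign_change[OF hopf_E_has_derivative])
  have denom_pos: "0 < t ^ 3 * (2 - t) ^ 3 * (2 + t) ^ 3 * (1 + t\<^sup>2)\<^sup>2" if "0 < t" "t < 2" for t :: real
    using that add_pos_nonneg[of 1 "t\<^sup>2"] by simp
  show "64 * hopf_poly (t\<^sup>2) / (t ^ 3 * (2 - t) ^ 3 * (2 + t) ^ 3 * (1 + t\<^sup>2)\<^sup>2) < 0"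
    if "0 < t" "t < d" for t
    using that assms denom_pos[of t] neg[of "t\<^sup>2"] power_strict_mono[of t d 2]
    by (simp add: divide_neg_pos)
  show "0 < 64 * hopf_poly (t\<^sup>2) / (t ^ 3 * (2 - t) ^ 3 * (2 + t) ^ 3 * (1 + t\<^sup>2)\<^sup>2)"
    if "d < t" "t < 2" for t
    using that assms denom_pos[of t] pos[of "t\<^sup>2"] power_strict_mono[of d t 2]
    by simp
qed (use assms in auto)

lemma hopf_E_near_minimizer:
  assumes "1.2036 \<le> d" "d \<le> 1.2037"
  shows "\<bar>hopf_E d - 93.5\<bar> < 0.01"
proof -
  define a b :: real where "a = 1.2036" and "b = 1.2037"
  have lower: "1 / (2 + b)\<^sup>2 \<le> 1 / (2 + d)\<^sup>2" "1 / (2 - a)\<^sup>2 \<le> 1 / (2 - d)\<^sup>2"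
      "2 / b\<^sup>2 \<le> 2 / d\<^sup>2" "4 / (1 + b\<^sup>2) \<le> 4 / (1 + d\<^sup>2)"
    and upper: "1 / (2 + d)\<^sup>2 \<le> 1 / (2 + a)\<^sup>2" "1 / (2 - d)\<^sup>2 \<le> 1 / (2 - b)\<^sup>2"
      "2 / d\<^sup>2 \<le> 2 / a\<^sup>2" "4 / (1 + d\<^sup>2) \<le> 4 / (1 + a\<^sup>2)"
    using assms unfolding a_def b_def
    by (intro frac_le power_mono add_left_mono; simp add: add_pos_nonneg)+
  have "93.49 < 8 + 8 * (1 / (2 + b)\<^sup>2 + 1 / (2 - a)\<^sup>2 + 2 / b\<^sup>2 + 4 + 2 + 4 / (1 + b\<^sup>2))"
    by (simp add: a_def b_def power_numeral_reduce)
  with lower have "93.49 < hopf_E d"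
    unfolding hopf_E_def distrib_left by linarith
  moreover have "8 + 8 * (1 / (2 + a)\<^sup>2 + 1 / (2 - b)\<^sup>2 + 2 / a\<^sup>2 + 4 + 2 + 4 / (1 + a\<^sup>2)) < 93.51"
    by (simp add: a_def b_def power_numeral_reduce)
  with upper have "hopf_E d < 93.51"
    unfolding hopf_E_def distrib_left by linarith
  ultimately show ?thesis
    unfolding abs_less_iff by simp
qed

theorem mainTheorem4:
  shows "(\<forall>\<Delta>::real. 0 < \<Delta> \<and> \<Delta> < 2 \<longrightarrow>
            MD_energy [square1, square2 \<Delta>] = hopf_E \<Delta>)
       \<and> (\<exists>!x::real. 0 < x \<and> x < 4 \<and> hopf_poly x = 0)
       \<and> (\<exists>!d::real. 0 < d \<and> d < 2 \<and>
             (\<forall>\<Delta>. 0 < \<Delta> \<and> \<Delta> < 2 \<longrightarrow> hopf_E d \<le> hopf_E \<Delta>))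
       \<and> (\<forall>d::real. 0 < d \<and> d < 2 \<and>
             (\<forall>\<Delta>. 0 < \<Delta> \<and> \<Delta> < 2 \<longrightarrow> hopf_E d \<le> hopf_E \<Delta>) \<longrightarrow>
             hopf_poly (d\<^sup>2) = 0 \<and> \<bar>d - 1.203\<bar> < 0.001 \<and> \<bar>hopf_E d - 93.5\<bar> < 0.01)"
proof -
  obtain x0 where x0: "1.2036\<^sup>2 < x0" "x0 < 1.2037\<^sup>2" "hopf_poly x0 = 0"
    and neg: "\<And>x. 0 < x \<Longrightarrow> x < x0 \<Longrightarrow> hopf_poly x < 0"
    and pos: "\<And>x. x0 < x \<Longrightarrow> 0 < hopf_poly x"
    using hopf_poly_root by blast
  define d0 where "d0 = sqrt x0"
  have d0: "1.2036 < d0" "d0 < 1.2037" "d0\<^sup>2 = x0"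
    using real_less_rsqrt[OF x0(1)] real_sqrt_less_mono[OF x0(2)] le_less_trans[OF zero_le_power2 x0(1)]
    unfolding d0_def by simp_all
  have strict_min: "hopf_E d0 < hopf_E \<Delta>" if "0 < \<Delta>" "\<Delta> < 2" "\<Delta> \<noteq> d0" for \<Delta>
    using hopf_E_strict_min[of d0 \<Delta>] d0 neg pos that by simp
  have minimizer_iff: "(0 < d \<and> d < 2 \<and> (\<forall>\<Delta>. 0 < \<Delta> \<and> \<Delta> < 2 \<longrightarrow> hopf_E d \<le> hopf_E \<Delta>))
      \<longleftrightarrow> d = d0" for d
    using minimizer_iff_eq_strict_minimizer[of "\<lambda>d. 0 < d \<and> d < 2" d0 hopf_E d] strict_min d0
    by auto
  have root_iff: "(0 < x \<and> x < 4 \<and> hopf_poly x = 0) \<longleftrightarrow> x = x0" for x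
    using neg[of x] pos[of x] x0 by (cases x x0 rule: linorder_cases) (auto simp: power2_eq_square)
  show ?thesis
    unfolding minimizer_iff root_iff
    using MD_energy_hopf_link hopf_E_near_minimizer[of d0] d0 x0(3) by auto
qed

end
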